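(* Let $b\ge 2$ and $m\ge 0$ be integers. Consider the following nondeterministic procedure. Set $\mathcal U_1=[0,1)^2$. For $n=1,2,\ldots$: if $\mathcal U_n=\emptyset$, stop; otherwise choose an arbitrary box $X_n=\prod_{j=1}^2\left[\frac{u_j(n)}{b^m},\frac{u_j(n)+1}{b^m}\right)\subseteq \mathcal U_n$ with $u_j(n)\in\{0,1,\ldots,b^m-1\}$, and set $\mathcal U_{n+1}=\mathcal U_n\setminus\bigcup_{E\in\mathcal E_m(X_n)}E$. If a run of this procedure stops after exactly $b^m$ boxes $X_1,\ldots,X_{b^m}$ have been chosen, then these boxes constitute a $(0,m,2)$-net in base $b$, i.e., every elementary $b$-adic interval of volume $b^{-m}$ in $[0,1)^2$ contains exactly one of $X_1,\ldots,X_{b^m}$ (equivalently, for any choice of points $\boldsymbol x_n\in X_n$, the set $\{\boldsymbol x_1,\ldots,\boldsymbol x_{b^m}\}$ is a $(0,m,2)$-net in base $b$).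
   Context: An elementary $b$-adic interval in $[0,1)^s$ is a set $\prod_{j=1}^s\left[\frac{a_j}{b^{d_j}},\frac{a_j+1}{b^{d_j}}\right)$ with $d_j\in\mathbb N_0$ and $a_j\in\{0,1,\ldots,b^{d_j}-1\}$; its volume is $b^{-(d_1+\cdots+d_s)}$. For a box $X=\prod_{j=1}^s\left[\frac{u_j}{b^m},\frac{u_j+1}{b^m}\right)$, $\mathcal E_m(X)$ denotes the set of all elementary $b$-adic intervals of volume $b^{-m}$ that contain $X$ as a subset. For integers $0\le t\le m$, a $b^m$-element point set $\mathcal P$ in $[0,1)^s$ is a $(t,m,s)$-net in base $b$ if every elementary $b$-adic interval of volume $b^{t-m}$ contains exactly $b^t$ points of $\mathcal P$. *)

theory Defs
  imports Main Complex_Main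
begin

definition badic :: "nat \<Rightarrow> nat \<Rightarrow> nat \<Rightarrow> real set" where
  "badic b d a = {x. real a / real b ^ d \<le> x \<and> x < (real a + 1) / real b ^ d}"

definition elem_int2 :: "nat \<Rightarrow> nat \<Rightarrow> (real \<times> real) set set" where
  "elem_int2 b k = {badic b d1 a1 \<times> badic b d2 a2 | d1 d2 a1 a2.
       d1 + d2 = k \<and> a1 < b ^ d1 \<and> a2 < b ^ d2}"

definition box2 :: "nat \<Rightarrow> nat \<Rightarrow> nat \<times> nat \<Rightarrow> (real \<times> real) set" where
  "box2 b m u = badic b m (fst u) \<times> badic b m (snd u)"

definition Em :: "nat \<Rightarrow> nat \<Rightarrow> (real \<times> real) set \<Rightarrow> (real \<times> real) set set" where
  "Em b m X = {E \<in> elem_int2 b m. X \<subseteq> E}"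

definition unit_square :: "(real \<times> real) set" where
  "unit_square = {0..<1} \<times> {0..<1}"

definition tms_net2 :: "nat \<Rightarrow> nat \<Rightarrow> nat \<Rightarrow> (real \<times> real) set \<Rightarrow> bool" where
  "tms_net2 b t m P \<longleftrightarrow> t \<le> m \<and> P \<subseteq> unit_square \<and> finite P \<and> card P = b ^ m \<and>
     (\<forall>E \<in> elem_int2 b (m - t). card (P \<inter> E) = b ^ t)"

definition run_stops_after :: "nat \<Rightarrow> nat \<Rightarrow> (nat \<Rightarrow> (real \<times> real) set) \<Rightarrow>
    (nat \<Rightarrow> nat \<times> nat) \<Rightarrow> nat \<Rightarrow> bool" where
  "run_stops_after b m U u N \<longleftrightarrow>
     U 1 = unit_square \<and>
     (\<forall>n \<in> {1..N}. U n \<noteq> {} \<and> fst (u n) < b ^ m \<and> snd (u n) < b ^ m \<and>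
        box2 b m (u n) \<subseteq> U n \<and>
        U (Suc n) = U n - \<Union> (Em b m (box2 b m (u n)))) \<and>
     U (Suc N) = {}"

end

theory Submission
  imports Defs
begin

text \<open>Choosing X_n removes every elementary interval of volume b^-m that contains it, so no later
  box lies in such an interval: each interval contains at most one chosen box. An m-box lies in
  exactly m+1 of these intervals (one for each split d1 + d2 = m), and there are (m+1) b^m of
  them. Double counting the incidences between the b^m chosen boxes and the intervals forces
  every interval to contain exactly one box. Since a point of X_n lies in an elementary interval
  of volume b^-m iff X_n does, any choice of points from the boxes is a (0,m,2)-net.\<close>

lemma badic_iff_floor:
  assumes "b > 0"
  shows "x \<in> badic b k c \<longleftrightarrow> \<lfloor>x * real b ^ k\<rfloor> = int c"
  using assms unfolding badic_def floor_eq_iff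
  by (simp add: pos_divide_le_eq pos_less_divide_eq)

lemma floor_mult_power_le:
  assumes "b > 0" "d \<le> m"
  shows "\<lfloor>x * real b ^ d\<rfloor> = \<lfloor>x * real b ^ m\<rfloor> div int (b ^ (m - d))"
proof -
  have "real b ^ m = real b ^ d * real b ^ (m - d)"
    using assms(2) by (simp flip: power_add)
  then have "x * real b ^ d = (x * real b ^ m) / real_of_int (int (b ^ (m - d)))"
    using assms(1) by (simp add: field_simps)
  then show ?thesis
    using floor_divide_real_eq_div[of "int (b ^ (m - d))" "x * real b ^ m"] by simp
qed

lemma badic_coarsen_iff:
  assumes "b > 0" "d \<le> m" "x \<in> badic b m a"
  shows "x \<in> badic b d c \<longleftrightarrow> c = a div b ^ (m - d)"
proof -
  have "\<lfloor>x * real b ^ m\<rfloor> = int a"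
    using assms(1,3) badic_iff_floor by blast
  then have "\<lfloor>x * real b ^ d\<rfloor> = int (a div b ^ (m - d))"
    using floor_mult_power_le[OF assms(1,2)] by (simp add: zdiv_int)
  then show ?thesis
    using badic_iff_floor[OF assms(1)] by auto
qed

lemma left_endpoint_in_badic: "b > 0 \<Longrightarrow> real a / real b ^ m \<in> badic b m a"
  unfolding badic_def by (simp add: divide_strict_right_mono)

lemma badic_subset_unit_interval:
  assumes "a < b ^ m"
  shows "badic b m a \<subseteq> {0..<1}"
proof -
  have "real a + 1 \<le> real b ^ m"
    using assms by (metis Suc_leI add.commute of_nat_Suc of_nat_le_iff of_nat_power)
  then have "(real a + 1) / real b ^ m \<le> 1"
    by (cases "b = 0") (auto simp: divide_le_eq)
  moreover have "0 \<le> real a / real b ^ m"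
    by simp
  ultimately have "0 \<le> x \<and> x < 1" if "x \<in> badic b m a" for x
    using that unfolding badic_def by (smt (verit) mem_Collect_eq)
  then show ?thesis
    by auto
qed

lemma box2_subset_unit_square:
  "fst v < b ^ m \<Longrightarrow> snd v < b ^ m \<Longrightarrow> box2 b m v \<subseteq> unit_square"
  unfolding box2_def unit_square_def
  using badic_subset_unit_interval by blast

lemma corner_in_box2: "b > 0 \<Longrightarrow> (real (fst v) / real b ^ m, real (snd v) / real b ^ m) \<in> box2 b m v"
  by (simp add: box2_def left_endpoint_in_badic)

lemma mem_rect_of_mem_box2_iff:
  assumes "b > 0" "d \<le> m" "p \<in> box2 b m v"
  shows "p \<in> badic b d a1 \<times> badic b (m - d) a2 \<longleftrightarrow>
    a1 = fst v div b ^ (m - d) \<and> a2 = snd v div b ^ d"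
proof -
  obtain p1 p2 where p: "p = (p1, p2)" by force
  have "p1 \<in> badic b m (fst v)" "p2 \<in> badic b m (snd v)"
    using assms(3) p by (auto simp: box2_def)
  moreover have "m - (m - d) = d"
    using assms(2) by simp
  ultimately show ?thesis
    using p badic_coarsen_iff[OF assms(1,2)] badic_coarsen_iff[OF assms(1), of "m - d" m]
    by auto
qed

lemma box2_subset_rect_iff:
  assumes "b > 0" "d \<le> m"
  shows "box2 b m v \<subseteq> badic b d a1 \<times> badic b (m - d) a2 \<longleftrightarrow>
    a1 = fst v div b ^ (m - d) \<and> a2 = snd v div b ^ d"
  using mem_rect_of_mem_box2_iff[OF assms] corner_in_box2[OF assms(1), of v] by blast

lemma mem_elem_int2_iff_box2_subset:
  assumes "b > 0" "p \<in> box2 b m v" "E \<in> elem_int2 b m"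
  shows "p \<in> E \<longleftrightarrow> box2 b m v \<subseteq> E"
proof -
  obtain d1 d2 a1 a2 where "E = badic b d1 a1 \<times> badic b d2 a2" "d1 + d2 = m"
    using assms(3) unfolding elem_int2_def by blast
  then have "d1 \<le> m" "E = badic b d1 a1 \<times> badic b (m - d1) a2"
    by auto
  then show ?thesis
    using mem_rect_of_mem_box2_iff[OF assms(1) _ assms(2)] box2_subset_rect_iff[OF assms(1)] by simp
qed

text \<open>Incidences are counted over the index triples (d, a1, a2) rather than over the intervals
  themselves.\<close>

definition elem_index :: "nat \<Rightarrow> nat \<Rightarrow> (nat \<times> nat \<times> nat) set" where
  "elem_index b m = (SIGMA d:{..m}. {..<b ^ d} \<times> {..<b ^ (m - d)})"

definition elem_rect :: "nat \<Rightarrow> nat \<Rightarrow> nat \<times> nat \<times> nat \<Rightarrow> (real \<times> real) set" where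
  "elem_rect b m t = (case t of (d, a1, a2) \<Rightarrow> badic b d a1 \<times> badic b (m - d) a2)"

lemma elem_int2_eq_image_elem_rect: "elem_int2 b m = elem_rect b m ` elem_index b m"
  unfolding elem_int2_def elem_rect_def elem_index_def
  by (fastforce simp: image_iff diff_add_inverse)

lemma finite_elem_index: "finite (elem_index b m)"
  by (simp add: elem_index_def)

lemma card_elem_index: "card (elem_index b m) = (m + 1) * b ^ m"
proof -
  have "card (elem_index b m) = (\<Sum>d\<le>m. card ({..<b ^ d} \<times> {..<b ^ (m - d)}))"
    unfolding elem_index_def by (simp add: card_SigmaI)
  also have "\<dots> = (\<Sum>d\<le>m. b ^ m)"
    by (rule sum.cong) (auto simp: card_cartesian_product simp flip: power_add)
  finally show ?thesis by simp
qed

lemma card_elem_index_containing_box2: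
  assumes "b > 0" "fst v < b ^ m" "snd v < b ^ m"
  shows "card {t \<in> elem_index b m. box2 b m v \<subseteq> elem_rect b m t} = m + 1"
proof -
  define g where "g d = (d, fst v div b ^ (m - d), snd v div b ^ d)" for d
  have "{t \<in> elem_index b m. box2 b m v \<subseteq> elem_rect b m t} = g ` {..m}"
  proof (intro set_eqI iffI)
    fix t assume "t \<in> {t \<in> elem_index b m. box2 b m v \<subseteq> elem_rect b m t}"
    then obtain d a1 a2 where "t = (d, a1, a2)" "d \<le> m"
      "box2 b m v \<subseteq> badic b d a1 \<times> badic b (m - d) a2"
      unfolding elem_index_def elem_rect_def by auto
    then show "t \<in> g ` {..m}"
      using box2_subset_rect_iff[OF assms(1)] unfolding g_def by auto
  next
    fix t assume "t \<in> g ` {..m}"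
    then obtain d where d: "d \<le> m" "t = g d"
      by auto
    have "fst v < b ^ d * b ^ (m - d)" "snd v < b ^ (m - d) * b ^ d"
      using assms(2,3) d(1) by (simp_all flip: power_add)
    then have "t \<in> elem_index b m"
      using d by (simp add: elem_index_def g_def less_mult_imp_div_less)
    moreover have "box2 b m v \<subseteq> elem_rect b m t"
      using box2_subset_rect_iff[OF assms(1) d(1)] d(2) by (simp add: elem_rect_def g_def)
    ultimately show "t \<in> {t \<in> elem_index b m. box2 b m v \<subseteq> elem_rect b m t}"
      by simp
  qed
  moreover have "inj_on g {..m}"
    unfolding g_def inj_on_def by auto
  ultimately show ?thesis
    by (simp add: card_image)
qed

lemma card_eq_1_by_double_counting:
  fixes R :: "'a \<Rightarrow> 'b \<Rightarrow> bool"
  assumes "finite I" "finite T"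
    and at_most_one: "\<And>t. t \<in> T \<Longrightarrow> card {i \<in> I. R i t} \<le> 1"
    and regular: "\<And>i. i \<in> I \<Longrightarrow> card {t \<in> T. R i t} = k"
    and card_T: "card T = k * card I" and "t \<in> T"
  shows "card {i \<in> I. R i t} = 1"
proof (rule ccontr)
  assume "card {i \<in> I. R i t} \<noteq> 1"
  with at_most_one \<open>t \<in> T\<close> have "card {i \<in> I. R i t} < 1"
    by fastforce
  with at_most_one have "(\<Sum>t\<in>T. card {i \<in> I. R i t}) < (\<Sum>t\<in>T. 1)"
    using \<open>finite T\<close> \<open>t \<in> T\<close> by (intro sum_strict_mono_ex1) auto
  also have "\<dots> = (\<Sum>i\<in>I. card {t \<in> T. R i t})"
    using card_T regular by simp
  also have "\<dots> = (\<Sum>t\<in>T. card {i \<in> I. R i t})"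
    using sum.swap_restrict[OF assms(1,2), of "\<lambda>_ _. 1::nat" R] by simp
  finally show False by simp
qed

lemma elem_int2_contains_unique_box2:
  assumes "b > 0" "finite I" "card I = b ^ m"
    and bounded: "\<And>n. n \<in> I \<Longrightarrow> fst (v n) < b ^ m \<and> snd (v n) < b ^ m"
    and separated: "\<And>E i j. E \<in> elem_int2 b m \<Longrightarrow> i \<in> I \<Longrightarrow> j \<in> I \<Longrightarrow>
      box2 b m (v i) \<subseteq> E \<Longrightarrow> box2 b m (v j) \<subseteq> E \<Longrightarrow> i = j"
    and "E \<in> elem_int2 b m"
  shows "card {n \<in> I. box2 b m (v n) \<subseteq> E} = 1"
proof -
  obtain t where t: "t \<in> elem_index b m" "E = elem_rect b m t"
    using \<open>E \<in> elem_int2 b m\<close> elem_int2_eq_image_elem_rect by blast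
  have "card {n \<in> I. box2 b m (v n) \<subseteq> elem_rect b m s} \<le> 1" if "s \<in> elem_index b m" for s
    using separated[of "elem_rect b m s"] that \<open>finite I\<close>
    by (auto simp: card_le_Suc0_iff_eq elem_int2_eq_image_elem_rect)
  moreover have "card {s \<in> elem_index b m. box2 b m (v n) \<subseteq> elem_rect b m s} = m + 1"
    if "n \<in> I" for n
    using card_elem_index_containing_box2[OF \<open>b > 0\<close>] bounded[OF that] by blast
  moreover have "card (elem_index b m) = (m + 1) * card I"
    using card_elem_index \<open>card I = b ^ m\<close> by simp
  ultimately show ?thesis
    unfolding t(2) using card_eq_1_by_double_counting[OF \<open>finite I\<close> finite_elem_index _ _ _ t(1),
      where R = "\<lambda>n s. box2 b m (v n) \<subseteq> elem_rect b m s" and k = "m + 1"]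
    by blast
qed

lemma tms_net2_of_points_in_boxes:
  assumes "b > 0" "finite I" "card I = b ^ m"
    and bounded: "\<And>n. n \<in> I \<Longrightarrow> fst (v n) < b ^ m \<and> snd (v n) < b ^ m"
    and unique: "\<And>E. E \<in> elem_int2 b m \<Longrightarrow> card {n \<in> I. box2 b m (v n) \<subseteq> E} = 1"
    and x: "\<And>n. n \<in> I \<Longrightarrow> x n \<in> box2 b m (v n)"
  shows "tms_net2 b 0 m (x ` I)"
proof -
  have mem_iff: "x n \<in> E \<longleftrightarrow> box2 b m (v n) \<subseteq> E" if "n \<in> I" "E \<in> elem_int2 b m" for n E
    using mem_elem_int2_iff_box2_subset[OF \<open>b > 0\<close> x[OF that(1)] that(2)] .
  have points_in_E: "x ` I \<inter> E = x ` {n \<in> I. box2 b m (v n) \<subseteq> E}" if "E \<in> elem_int2 b m" for E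
    using mem_iff[OF _ that] by blast
  have inj: "inj_on x I"
  proof (rule inj_onI)
    fix i j assume ij: "i \<in> I" "j \<in> I" "x i = x j"
    define E where "E = badic b m (fst (v i)) \<times> badic b 0 0"
    have E: "E \<in> elem_int2 b m"
      unfolding E_def elem_int2_def using bounded[OF ij(1)] by force
    have "box2 b m (v i) \<subseteq> E"
      using box2_subset_rect_iff[OF \<open>b > 0\<close> order_refl, of m "v i"] bounded[OF ij(1)]
      by (simp add: E_def)
    moreover from this have "box2 b m (v j) \<subseteq> E"
      using mem_iff[OF ij(1) E] mem_iff[OF ij(2) E] ij(3) by simp
    ultimately have "i \<in> {n \<in> I. box2 b m (v n) \<subseteq> E}" "j \<in> {n \<in> I. box2 b m (v n) \<subseteq> E}"
      using ij by auto
    then show "i = j"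
      using unique[OF E] by (metis card_1_singletonE singletonD)
  qed
  have "x ` I \<subseteq> unit_square"
  proof (rule image_subsetI)
    fix n assume "n \<in> I"
    then show "x n \<in> unit_square"
      using box2_subset_unit_square[of "v n" b m] bounded x by blast
  qed
  moreover have "card (x ` I \<inter> E) = b ^ 0" if "E \<in> elem_int2 b (m - 0)" for E
  proof -
    have "inj_on x {n \<in> I. box2 b m (v n) \<subseteq> E}"
      using inj by (rule inj_on_subset) auto
    then show ?thesis
      using points_in_E unique that by (simp add: card_image)
  qed
  moreover have "card (x ` I) = b ^ m"
    using card_image[OF inj] \<open>card I = b ^ m\<close> by simp
  ultimately show ?thesis
    unfolding tms_net2_def using \<open>finite I\<close> by blast
qed

lemma run_boxes_separated:
  assumes "b > 0" "run_stops_after b m U u N"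
    and "E \<in> elem_int2 b m" "i \<in> {1..N}" "j \<in> {1..N}"
    and "box2 b m (u i) \<subseteq> E" "box2 b m (u j) \<subseteq> E"
  shows "i = j"
proof -
  have step: "U (Suc n) = U n - \<Union> (Em b m (box2 b m (u n)))"
    and chosen: "box2 b m (u n) \<subseteq> U n" if "n \<in> {1..N}" for n
    using assms(2) that unfolding run_stops_after_def by blast+
  have no_later: False
    if "i' \<in> {1..N}" "j' \<in> {1..N}" "i' < j'" "box2 b m (u i') \<subseteq> E" "box2 b m (u j') \<subseteq> E" for i' j'
  proof -
    have "U (Suc i') \<inter> E = {}"
      using step[OF that(1)] that(4) \<open>E \<in> elem_int2 b m\<close> by (auto simp: Em_def)
    moreover have "U j' \<subseteq> U (Suc i')"
      by (rule lift_Suc_antimono_le_ivl[of "{1..N}"]) (use step that(2,3) in auto)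
    ultimately show False
      using chosen[OF that(2)] that(5) corner_in_box2[OF \<open>b > 0\<close>, of "u j'" m] by blast
  qed
  show "i = j"
    using no_later[of i j] no_later[of j i] assms(4-7) by (metis linorder_neqE_nat)
qed

theorem mainTheorem3:
  fixes b m :: nat
    and U :: "nat \<Rightarrow> (real \<times> real) set"
    and u :: "nat \<Rightarrow> nat \<times> nat"
  assumes "b \<ge> 2"
    and "run_stops_after b m U u (b ^ m)"
  shows "(\<forall>E \<in> elem_int2 b m. card {n \<in> {1..b ^ m}. box2 b m (u n) \<subseteq> E} = 1)
       \<and> (\<forall>x :: nat \<Rightarrow> real \<times> real. (\<forall>n \<in> {1..b ^ m}. x n \<in> box2 b m (u n)) \<longrightarrow>
            tms_net2 b 0 m (x ` {1..b ^ m}))"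
proof -
  have "b > 0" using assms(1) by simp
  have bounded: "\<And>n. n \<in> {1..b ^ m} \<Longrightarrow> fst (u n) < b ^ m \<and> snd (u n) < b ^ m"
    using assms(2) unfolding run_stops_after_def by blast
  have separated: "i = j"
    if "E \<in> elem_int2 b m" "i \<in> {1..b ^ m}" "j \<in> {1..b ^ m}"
      "box2 b m (u i) \<subseteq> E" "box2 b m (u j) \<subseteq> E" for E i j
    using run_boxes_separated[OF \<open>b > 0\<close> assms(2) that] .
  have unique: "card {n \<in> {1..b ^ m}. box2 b m (u n) \<subseteq> E} = 1" if "E \<in> elem_int2 b m" for E
    using elem_int2_contains_unique_box2[where I = "{1..b ^ m}" and v = u,
        OF \<open>b > 0\<close> _ _ bounded separated that]
    by simp
  have "tms_net2 b 0 m (x ` {1..b ^ m})" if "\<forall>n \<in> {1..b ^ m}. x n \<in> box2 b m (u n)" for x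
    using that tms_net2_of_points_in_boxes[where I = "{1..b ^ m}" and v = u and x = x,
        OF \<open>b > 0\<close> finite_atLeastAtMost _ bounded unique]
    by simp
  with unique show ?thesis
    by blast
qed

end
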